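(* The maximal eigenvalue radius function $\rho$ associated to an admissible weight $\varphi:\mathbb{C}^n\to\mathbb{R}$ is bounded.
   Context: A $C^2$ function $\varphi:\mathbb{C}^n\to\mathbb{R}$ is plurisubharmonic if its complex Hessian $(\partial^2\varphi/\partial z_j\partial\bar z_k)$ is positive semidefinite everywhere. It is admissible if it is $C^2$, plurisubharmonic, and (a) there is $D<\infty$ with $\sup_{B(z,2r)}\Delta\varphi\le D\sup_{B(z,r)}\Delta\varphi$ for all $z\in\mathbb{C}^n$, $r>0$ ($\Delta$ the Euclidean Laplacian on $\mathbb{C}^n\cong\mathbb{R}^{2n}$, $B$ Euclidean balls), and (b) there is $c>0$ with $\inf_{z\in\mathbb{C}^n}\sup_{w\in B(z,c)}\Delta\varphi(w)>0$. Its maximal eigenvalue radius function is $\rho(z)=\sup\{r>0:\sup_{w\in B(z,r)}\Delta\varphi(w)\le r^{-2}\}$. *)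

theory Defs
  imports "HOL-Analysis.Analysis" "HOL-Library.Complex_Order"
begin

text \<open>We identify C^n with the type complex^'n (its norm is the Euclidean norm
 of R^{2n}).  Real coordinates: x_j along axis j 1, y_j along axis j i.\<close>

definition C2_fun :: "(complex^'n \<Rightarrow> real) \<Rightarrow> bool" where
  "C2_fun f \<longleftrightarrow>
     (\<exists>f' :: complex^'n \<Rightarrow> ((complex^'n) \<Rightarrow>\<^sub>L real).
      \<exists>f'' :: complex^'n \<Rightarrow> ((complex^'n) \<Rightarrow>\<^sub>L ((complex^'n) \<Rightarrow>\<^sub>L real)).
        (\<forall>z. (f has_derivative blinfun_apply (f' z)) (at z)) \<and>
        (\<forall>z. (f' has_derivative blinfun_apply (f'' z)) (at z)) \<and>
        continuous_on UNIV f'')"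

definition dirderiv :: "complex^'n \<Rightarrow> (complex^'n \<Rightarrow> real) \<Rightarrow> complex^'n \<Rightarrow> real" where
  "dirderiv v f z = deriv (\<lambda>t::real. f (z + t *\<^sub>R v)) 0"

definition dx :: "'n \<Rightarrow> (complex^'n \<Rightarrow> real) \<Rightarrow> complex^'n \<Rightarrow> real" where
  "dx j f = dirderiv (axis j 1) f"

definition dy :: "'n \<Rightarrow> (complex^'n \<Rightarrow> real) \<Rightarrow> complex^'n \<Rightarrow> real" where
  "dy j f = dirderiv (axis j \<i>) f"

text \<open>Complex Hessian entry d^2 f / dz_j d(conj z_k)
  = 1/4 (f_{x_j x_k} + f_{y_j y_k} + i (f_{x_j y_k} - f_{y_j x_k})).\<close>
definition complex_hessian :: "(complex^'n \<Rightarrow> real) \<Rightarrow> complex^'n \<Rightarrow> 'n \<Rightarrow> 'n \<Rightarrow> complex" where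
  "complex_hessian f z j k =
     (complex_of_real (dx j (dx k f) z + dy j (dy k f) z)
      + \<i> * complex_of_real (dx j (dy k f) z - dy j (dx k f) z)) / 4"

definition psd_complex :: "('n::finite \<Rightarrow> 'n \<Rightarrow> complex) \<Rightarrow> bool" where
  "psd_complex H \<longleftrightarrow>
     (\<forall>\<xi> :: complex^'n. 0 \<le> (\<Sum>j\<in>UNIV. \<Sum>k\<in>UNIV. cnj (\<xi> $ j) * H j k * \<xi> $ k))"

definition plurisubharmonic :: "(complex^'n::finite \<Rightarrow> real) \<Rightarrow> bool" where
  "plurisubharmonic f \<longleftrightarrow> C2_fun f \<and> (\<forall>z. psd_complex (complex_hessian f z))"

definition laplacian :: "(complex^'n::finite \<Rightarrow> real) \<Rightarrow> complex^'n \<Rightarrow> real" where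
  "laplacian f z = (\<Sum>j\<in>UNIV. dx j (dx j f) z + dy j (dy j f) z)"

definition admissible :: "(complex^'n::finite \<Rightarrow> real) \<Rightarrow> bool" where
  "admissible f \<longleftrightarrow> C2_fun f \<and> plurisubharmonic f \<and>
     (\<exists>D::real. \<forall>z r. r > 0 \<longrightarrow>
        (SUP w\<in>ball z (2*r). laplacian f w) \<le> D * (SUP w\<in>ball z r. laplacian f w)) \<and>
     (\<exists>c>0. (INF z. SUP w\<in>ball z c. laplacian f w) > 0)"

text \<open>Maximal eigenvalue radius function, valued in the extended reals
  so that the supremum is always meaningful.\<close>
definition max_eig_radius :: "(complex^'n::finite \<Rightarrow> real) \<Rightarrow> complex^'n \<Rightarrow> ereal" where
  "max_eig_radius f z =
     Sup (ereal ` {r::real. r > 0 \<and> (SUP w\<in>ball z r. laplacian f w) \<le> 1 / r^2})"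

end

theory Submission imports Defs begin

text \<open>Condition (b) gives c, a > 0 with a \<le> sup of \<Delta>\<phi> over every ball of radius c.  If
  r > c is an admissible radius at z, then a \<le> sup of \<Delta>\<phi> over B(z,r) \<le> 1/r^2, so
  r \<le> 1/sqrt a; hence \<rho> \<le> max c (1/sqrt a).  Besides this only regularity is needed:
  \<Delta>\<phi> is continuous (so bounded on balls) and nonnegative (it is a trace of the
  complex Hessian), which makes the infimum in (b) meaningful.\<close>

lemma dirderiv_eq_derivative:
  fixes f :: "complex^'n \<Rightarrow> real"
  assumes "(f has_derivative L) (at z)"
  shows "dirderiv v f z = L v"
proof -
  have "((\<lambda>t::real. z + t *\<^sub>R v) has_derivative (\<lambda>t. t *\<^sub>R v)) (at 0)"
    by (auto intro!: derivative_eq_intros)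
  with assms have "((\<lambda>t::real. f (z + t *\<^sub>R v)) has_derivative (\<lambda>t. L (t *\<^sub>R v))) (at 0)"
    using diff_chain_at[of "\<lambda>t::real. z + t *\<^sub>R v" "\<lambda>t. t *\<^sub>R v" 0 f L] by (simp add: o_def)
  moreover have "(\<lambda>t. L (t *\<^sub>R v)) = (*) (L v)"
    using has_derivative_linear[OF assms] by (auto simp: linear_scale mult.commute)
  ultimately have "((\<lambda>t::real. f (z + t *\<^sub>R v)) has_field_derivative L v) (at 0)"
    by (simp add: has_field_derivative_def)
  then show ?thesis unfolding dirderiv_def by (rule DERIV_imp_deriv)
qed

lemma dirderiv_dirderiv_eq_second_derivative:
  fixes f :: "complex^'n \<Rightarrow> real"
  assumes f': "\<And>z. (f has_derivative blinfun_apply (f' z)) (at z)"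
    and f'': "\<And>z. (f' has_derivative blinfun_apply (f'' z)) (at z)"
  shows "dirderiv u (dirderiv v f) z = f'' z u v"
proof -
  have "dirderiv v f = (\<lambda>z. f' z v)"
    using dirderiv_eq_derivative[OF f'] by auto
  moreover have "((\<lambda>z. f' z v) has_derivative (\<lambda>h. f'' z h v)) (at z)"
    using blinfun.FDERIV[OF f'' has_derivative_const[of v]] by simp
  ultimately show ?thesis by (simp add: dirderiv_eq_derivative)
qed

lemma continuous_on_laplacian:
  assumes "C2_fun f"
  shows "continuous_on UNIV (laplacian f)"
proof -
  obtain f' f'' where f': "\<And>z. (f has_derivative blinfun_apply (f' z)) (at z)"
    and f'': "\<And>z. (f' has_derivative blinfun_apply (f'' z)) (at z)"
    and cont: "continuous_on UNIV f''"
    using assms unfolding C2_fun_def by blast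
  have "laplacian f =
      (\<lambda>z. \<Sum>j\<in>UNIV. f'' z (axis j 1) (axis j 1) + f'' z (axis j \<i>) (axis j \<i>))"
    by (auto simp: laplacian_def dx_def dy_def dirderiv_dirderiv_eq_second_derivative[OF f' f''])
  moreover have "continuous_on UNIV
      (\<lambda>z. \<Sum>j\<in>UNIV. f'' z (axis j 1) (axis j 1) + f'' z (axis j \<i>) (axis j \<i>))"
    by (intro continuous_intros blinfun.continuous_on cont)
  ultimately show ?thesis by simp
qed

lemma bdd_above_laplacian_ball:
  assumes "C2_fun f"
  shows "bdd_above (laplacian f ` ball z r)"
proof -
  have "compact (laplacian f ` cball z r)"
    using continuous_on_laplacian[OF assms]
    by (intro compact_continuous_image) (auto intro: continuous_on_subset)
  then have "bdd_above (laplacian f ` cball z r)"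
    by (intro bounded_imp_bdd_above compact_imp_bounded)
  then show ?thesis by (rule bdd_above_mono) auto
qed

lemma psd_complex_diagonal_nonneg:
  assumes "psd_complex H"
  shows "0 \<le> H j j"
proof -
  have "0 \<le> (\<Sum>a\<in>UNIV. \<Sum>b\<in>UNIV. cnj (axis j (1::complex) $ a) * H a b * axis j 1 $ b)"
    using assms unfolding psd_complex_def by blast
  also have "\<dots> = (\<Sum>a\<in>UNIV. if a = j then H j j else 0)"
    by (intro sum.cong) (auto simp: axis_def if_distrib[where f=cnj] if_distrib[where f="\<lambda>x. _ * x"] cong: if_cong)
  finally show ?thesis by simp
qed

lemma laplacian_nonneg:
  assumes "plurisubharmonic f"
  shows "0 \<le> laplacian f z"
proof -
  have "0 \<le> dx j (dx j f) z + dy j (dy j f) z" for j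
  proof -
    have "0 \<le> complex_hessian f z j j"
      using assms by (auto simp: plurisubharmonic_def intro: psd_complex_diagonal_nonneg)
    then have "0 \<le> Re (complex_hessian f z j j)" by (simp add: less_eq_complex_def)
    then show ?thesis by (simp add: complex_hessian_def)
  qed
  then show ?thesis unfolding laplacian_def by (simp add: sum_nonneg)
qed

lemma admissible_uniform_lower_bound:
  assumes "admissible f"
  obtains c a where "c > 0" "a > 0" "\<And>z. a \<le> (SUP w\<in>ball z c. laplacian f w)"
proof -
  have C2: "C2_fun f" and psh: "plurisubharmonic f"
    using assms admissible_def by auto
  obtain c where "c > 0" and a: "(INF z. SUP w\<in>ball z c. laplacian f w) > 0"
    using assms admissible_def by blast
  have "0 \<le> (SUP w\<in>ball z c. laplacian f w)" for z
    using \<open>c > 0\<close> laplacian_nonneg[OF psh, of z]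
    by (intro cSUP_upper2[of _ _ z] bdd_above_laplacian_ball C2) auto
  then have "bdd_below (range (\<lambda>z. SUP w\<in>ball z c. laplacian f w))"
    by (rule bdd_belowI2)
  then have "(INF z. SUP w\<in>ball z c. laplacian f w) \<le> (SUP w\<in>ball z c. laplacian f w)" for z
    by (rule cINF_lower) auto
  with a show thesis by (rule that[OF \<open>c > 0\<close>])
qed

lemma radius_le_of_uniform_lower_bound:
  fixes g :: "'a::metric_space \<Rightarrow> real"
  assumes bdd: "\<And>z r. bdd_above (g ` ball z r)"
    and "c > 0" and "a > 0" and lower: "\<And>z. a \<le> (SUP w\<in>ball z c. g w)"
    and "r > 0" and small: "(SUP w\<in>ball z r. g w) \<le> 1 / r^2"
  shows "r \<le> max c (sqrt (1 / a))"
proof (cases "r \<le> c")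
  case False
  have "a \<le> (SUP w\<in>ball z r. g w)"
    using lower[of z] False \<open>c > 0\<close> by (smt (verit) bdd cSUP_subset_mono ball_eq_empty subset_ball)
  with small have "a \<le> 1 / r^2" by linarith
  with \<open>a > 0\<close> \<open>r > 0\<close> have "r^2 \<le> 1 / a" by (simp add: field_simps)
  then have "r \<le> sqrt (1 / a)" by (rule real_le_rsqrt)
  then show ?thesis by simp
qed simp

theorem mainTheorem12:
  fixes \<phi> :: "complex^'n::finite \<Rightarrow> real"
  assumes "admissible \<phi>"
  shows "\<exists>M::real. \<forall>z. max_eig_radius \<phi> z \<le> ereal M"
proof -
  obtain c a where "c > 0" "a > 0" "\<And>z. a \<le> (SUP w\<in>ball z c. laplacian \<phi> w)"
    using admissible_uniform_lower_bound[OF assms] by blast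
  moreover have "\<And>z r. bdd_above (laplacian \<phi> ` ball z r)"
    using assms by (simp add: admissible_def bdd_above_laplacian_ball)
  ultimately have "max_eig_radius \<phi> z \<le> ereal (max c (sqrt (1 / a)))" for z
    unfolding max_eig_radius_def
    using radius_le_of_uniform_lower_bound[where g="laplacian \<phi>" and c=c and a=a and z=z]
    by (intro Sup_least) (auto simp only: ereal_less_eq)
  then show ?thesis by blast
qed

end
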